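(* Let $\rho\in[0,1/2)$, $\beta\ge1$, positive weights $\omega_\ell$, and suppose there is a constant $c\in[0,1)$ with $$\frac{\bar p}{\bar p-\bar q}\le c\cdot\frac{2(1-2\rho)^2}{\beta-\beta^{-1}}+2(\rho-\rho^2)$$ (void if $\beta=1$), where $\bar p=\sum_\ell\omega_\ell p_\ell$, $\bar q=\sum_\ell\omega_\ell q_\ell$. Then for every instance generated by an IMLSBM in $\mathcal P_n(\rho,\{p_\ell\},\{q_\ell\},\beta)$ (i.e., deterministically for every realization), the output $\tilde{\mathbf z}^\star$ of Algorithm 1 (for any $\gamma>1$, $\varepsilon>0$) satisfies $$\mathcal L(\tilde{\mathbf z}^\star,\mathbf z^\star)\le C\cdot\frac{2+\varepsilon}{n^2(1-2\rho)^4}\cdot\frac{(\|\tau(\bar A)-\mathbb E\bar A\|+\Delta)^2}{(\bar p-\bar q)^2},$$ where $\Delta=\bar p-2\rho(1-\rho)(\bar p-\bar q)$, $\mathbb E\bar A$ is the marginal expectation (over label sampling and edges, with $\mathbf z^\star$ fixed), $\|\cdot\|$ is the spectral norm, and $C$ depends only on $c$.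
   Context: IMLSBM: global labels $\mathbf z^\star\in\{\pm1\}^n$, $\rho\in[0,1/2]$, $0<q_\ell<p_\ell<1$; individual labels $\mathbf z^{(\ell)}_i=\mathbf z^\star_i\xi_{\ell i}$, $\xi_{\ell i}$ i.i.d. with $P(\xi_{\ell i}=-1)=\rho$, $P(\xi_{\ell i}=1)=1-\rho$; given labels, symmetric zero-diagonal $A^{(\ell)}$ with independent upper entries Bern$(p_\ell)$ if $\mathbf z^{(\ell)}_i=\mathbf z^{(\ell)}_j$, else Bern$(q_\ell)$. $\mathcal P_n(\rho,\{p_\ell\},\{q_\ell\},\beta)$: models with $n/(2\beta)\le\#\{i:\mathbf z^\star_i=\pm1\}\le n\beta/2$. $\mathcal L(\hat{\mathbf z},\mathbf z)=n^{-1}\min\{d_H(\hat{\mathbf z},\mathbf z),d_H(-\hat{\mathbf z},\mathbf z)\}$. Algorithm 1 (inputs $\{A^{(\ell)}\}$, weights $\omega$, $\{p_\ell\}$, $\gamma>1$, $\varepsilon>0$): $\bar A=\sum_\ell\omega_\ell A^{(\ell)}$; $I=\{i\in[n]:\sum_j\bar A_{ij}>\gamma n\sum_\ell\omega_\ell p_\ell\}$; $\tau(\bar A)$ is $\bar A$ with all entries in rows or columns indexed by $I$ set to 0; $U\in\mathbb R^{n\times2}$ has orthonormal columns that are eigenvectors of $\tau(\bar A)$ for its two eigenvalues of largest absolute value; $(\hat Z,\hat X)$ is any pair with $\hat Z\in\{0,1\}^{n\times2}$ with each row a standard basis vector and $\hat X\in\mathbb R^{2\times 2}$ such that $\|\hat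 Z\hat X-U\|_F^2\le(1+\varepsilon)\min_{Z,X}\|ZX-U\|_F^2$; output $\tilde{\mathbf z}^\star_i=1$ if $\hat Z_{i1}=1$, else $-1$. *)

theory Defs
  imports "HOL-Probability.Probability"
begin

text \<open>Matrices of size n are functions nat => nat => real (entries with indices < n are
relevant); vectors of length n are functions nat => real.\<close>

definition mat_vec :: "nat \<Rightarrow> (nat \<Rightarrow> nat \<Rightarrow> real) \<Rightarrow> (nat \<Rightarrow> real) \<Rightarrow> nat \<Rightarrow> real" where
  "mat_vec n M x = (\<lambda>i. \<Sum>j<n. M i j * x j)"

definition vinner :: "nat \<Rightarrow> (nat \<Rightarrow> real) \<Rightarrow> (nat \<Rightarrow> real) \<Rightarrow> real" where
  "vinner n x y = (\<Sum>i<n. x i * y i)"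

definition vnorm :: "nat \<Rightarrow> (nat \<Rightarrow> real) \<Rightarrow> real" where
  "vnorm n x = sqrt (vinner n x x)"

definition spec_norm :: "nat \<Rightarrow> (nat \<Rightarrow> nat \<Rightarrow> real) \<Rightarrow> real" where
  "spec_norm n M = Sup {vnorm n (mat_vec n M x) | x. vnorm n x = 1}"

definition sym_mat :: "nat \<Rightarrow> (nat \<Rightarrow> nat \<Rightarrow> real) \<Rightarrow> bool" where
  "sym_mat n M \<longleftrightarrow> (\<forall>i<n. \<forall>j<n. M i j = M j i)"

definition adjacency :: "nat \<Rightarrow> (nat \<Rightarrow> nat \<Rightarrow> real) \<Rightarrow> bool" where
  "adjacency n M \<longleftrightarrow> sym_mat n M \<and> (\<forall>i<n. M i i = 0) \<and> (\<forall>i<n. \<forall>j<n. M i j \<in> {0, 1})"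

definition flip_pmf :: "real \<Rightarrow> int pmf" where
  "flip_pmf \<rho> = map_pmf (\<lambda>b. if b then -1 else 1) (bernoulli_pmf \<rho>)"

text \<open>Marginal distribution of the edge indicator A^(l)_ij (i /= j) with z* fixed:
  sample independent flips xi_i, xi_j, then an edge Bern(p) if the individual labels agree,
  Bern(q) otherwise.\<close>
definition edge_pmf :: "real \<Rightarrow> real \<Rightarrow> real \<Rightarrow> int \<Rightarrow> int \<Rightarrow> bool pmf" where
  "edge_pmf \<rho> p q zi zj =
     bind_pmf (pair_pmf (flip_pmf \<rho>) (flip_pmf \<rho>))
       (\<lambda>(a, b). bernoulli_pmf (if zi * a = zj * b then p else q))"

definition expected_Abar ::
  "nat \<Rightarrow> (nat \<Rightarrow> real) \<Rightarrow> (nat \<Rightarrow> real) \<Rightarrow> (nat \<Rightarrow> real) \<Rightarrow> real \<Rightarrow> (nat \<Rightarrow> int)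
     \<Rightarrow> nat \<Rightarrow> nat \<Rightarrow> real" where
  "expected_Abar L \<omega> p q \<rho> z = (\<lambda>i j.
     \<Sum>l<L. \<omega> l * (if i = j then 0 else
        measure_pmf.expectation (edge_pmf \<rho> (p l) (q l) (z i) (z j)) (\<lambda>e. if e then 1 else 0)))"

definition Abar :: "nat \<Rightarrow> (nat \<Rightarrow> real) \<Rightarrow> (nat \<Rightarrow> nat \<Rightarrow> nat \<Rightarrow> real) \<Rightarrow> nat \<Rightarrow> nat \<Rightarrow> real" where
  "Abar L \<omega> A = (\<lambda>i j. \<Sum>l<L. \<omega> l * A l i j)"

definition high_deg :: "nat \<Rightarrow> nat \<Rightarrow> (nat \<Rightarrow> real) \<Rightarrow> (nat \<Rightarrow> real) \<Rightarrow> real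
     \<Rightarrow> (nat \<Rightarrow> nat \<Rightarrow> real) \<Rightarrow> nat set" where
  "high_deg n L \<omega> p \<gamma> M = {i. i < n \<and> (\<Sum>j<n. M i j) > \<gamma> * real n * (\<Sum>l<L. \<omega> l * p l)}"

definition trim :: "nat \<Rightarrow> nat \<Rightarrow> (nat \<Rightarrow> real) \<Rightarrow> (nat \<Rightarrow> real) \<Rightarrow> real
     \<Rightarrow> (nat \<Rightarrow> nat \<Rightarrow> real) \<Rightarrow> nat \<Rightarrow> nat \<Rightarrow> real" where
  "trim n L \<omega> p \<gamma> M = (\<lambda>i j.
     if i \<in> high_deg n L \<omega> p \<gamma> M \<or> j \<in> high_deg n L \<omega> p \<gamma> M then 0 else M i j)"

text \<open>u1, u2 are orthonormal eigenvectors of M (eigenvalues lam1, lam2) for its two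
  eigenvalues of largest absolute value (counted with multiplicity): every eigenvalue of an
  eigenvector orthogonal to both has absolute value at most min(|lam1|, |lam2|).\<close>
definition top2_eigvecs :: "nat \<Rightarrow> (nat \<Rightarrow> nat \<Rightarrow> real) \<Rightarrow> (nat \<Rightarrow> real) \<Rightarrow> (nat \<Rightarrow> real) \<Rightarrow> bool" where
  "top2_eigvecs n M u1 u2 \<longleftrightarrow>
     vinner n u1 u1 = 1 \<and> vinner n u2 u2 = 1 \<and> vinner n u1 u2 = 0 \<and>
     (\<exists>lam1 lam2.
        (\<forall>i<n. mat_vec n M u1 i = lam1 * u1 i) \<and>
        (\<forall>i<n. mat_vec n M u2 i = lam2 * u2 i) \<and>
        (\<forall>v \<mu>. (\<exists>i<n. v i \<noteq> 0) \<and> (\<forall>i<n. mat_vec n M v i = \<mu> * v i) \<and>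
               vinner n v u1 = 0 \<and> vinner n v u2 = 0 \<longrightarrow> \<bar>\<mu>\<bar> \<le> \<bar>lam1\<bar> \<and> \<bar>\<mu>\<bar> \<le> \<bar>lam2\<bar>))"

text \<open>k-means objective ||Z X - U||_F^2: Z is encoded by an assignment k with k i \<in> {0,1}
  (row i of Z is the standard basis vector e_(k i + 1)), X is a 2 x 2 matrix (indices 0,1),
  and U has columns u1, u2.\<close>
definition kmeans_cost :: "nat \<Rightarrow> (nat \<Rightarrow> real) \<Rightarrow> (nat \<Rightarrow> real) \<Rightarrow> (nat \<Rightarrow> nat)
     \<Rightarrow> (nat \<Rightarrow> nat \<Rightarrow> real) \<Rightarrow> real" where
  "kmeans_cost n u1 u2 k X = (\<Sum>i<n. (X (k i) 0 - u1 i)\<^sup>2 + (X (k i) 1 - u2 i)\<^sup>2)"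

definition alg1_output :: "nat \<Rightarrow> nat \<Rightarrow> (nat \<Rightarrow> nat \<Rightarrow> nat \<Rightarrow> real) \<Rightarrow> (nat \<Rightarrow> real)
     \<Rightarrow> (nat \<Rightarrow> real) \<Rightarrow> real \<Rightarrow> real \<Rightarrow> (nat \<Rightarrow> int) \<Rightarrow> bool" where
  "alg1_output n L A \<omega> p \<gamma> \<epsilon> zt \<longleftrightarrow>
     (\<exists>u1 u2 k X.
        top2_eigvecs n (trim n L \<omega> p \<gamma> (Abar L \<omega> A)) u1 u2 \<and>
        (\<forall>i<n. k i < 2) \<and>
        (\<forall>k' X'. (\<forall>i<n. k' i < 2) \<longrightarrow>
           kmeans_cost n u1 u2 k X \<le> (1 + \<epsilon>) * kmeans_cost n u1 u2 k' X') \<and>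
        (\<forall>i<n. zt i = (if k i = 0 then 1 else -1)))"

definition hamming :: "nat \<Rightarrow> (nat \<Rightarrow> int) \<Rightarrow> (nat \<Rightarrow> int) \<Rightarrow> nat" where
  "hamming n x y = card {i. i < n \<and> x i \<noteq> y i}"

definition misclass_loss :: "nat \<Rightarrow> (nat \<Rightarrow> int) \<Rightarrow> (nat \<Rightarrow> int) \<Rightarrow> real" where
  "misclass_loss n zh z = real (min (hamming n zh z) (hamming n (\<lambda>i. - zh i) z)) / real n"

end

theory Submission
  imports Defs
begin

(* Let T be the trimmed matrix and P the two-block matrix with entries s inside and d across
   the communities, where s = pb - kappa (pb - qb), d = qb + kappa (pb - qb),
   kappa = 2 rho (1 - rho), so that s - d = (1 - 2 rho)^2 (pb - qb). The marginal expectation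
   of Abar is P - s I, hence T differs from P by at most eta = ||T - E Abar|| + s in operator norm.
   The hypothesis on c forces beta <= 3, so both communities contain at least n/6 nodes.
   Testing T on a block-constant vector shows that its two leading eigenvalues have modulus at
   least (s - d) n / 6 - eta; consequently both eigenvectors lie within O(theta),
   theta = eta / ((s - d) n), of block-constant vectors, whose two block values are separated
   by a constant multiple of 1/sqrt n. An approximate k-means solution can then misclassify only
   O((2 + eps) theta^2 n) nodes; for large theta the bound holds because the loss is at most 1/2. *)

section \<open>Euclidean geometry of the first n coordinates\<close>

lemma vinner_commute: "vinner n x y = vinner n y x"
  unfolding vinner_def by (simp add: mult.commute)

lemma vinner_add_left: "vinner n (\<lambda>i. x i + y i) w = vinner n x w + vinner n y w"
  and vinner_diff_left: "vinner n (\<lambda>i. x i - y i) w = vinner n x w - vinner n y w"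
  and vinner_scale_left: "vinner n (\<lambda>i. a * x i) w = a * vinner n x w"
  and vinner_add_right: "vinner n w (\<lambda>i. x i + y i) = vinner n w x + vinner n w y"
  and vinner_diff_right: "vinner n w (\<lambda>i. x i - y i) = vinner n w x - vinner n w y"
  and vinner_scale_right: "vinner n w (\<lambda>i. a * x i) = a * vinner n w x"
  unfolding vinner_def
  by (simp_all add: algebra_simps sum.distrib sum_subtractf sum_distrib_left)

lemmas vinner_bilinear = vinner_add_left vinner_diff_left vinner_scale_left
  vinner_add_right vinner_diff_right vinner_scale_right

lemma vinner_cong:
  "(\<And>i. i < n \<Longrightarrow> x i = x' i) \<Longrightarrow> (\<And>i. i < n \<Longrightarrow> y i = y' i) \<Longrightarrow> vinner n x y = vinner n x' y'"
  unfolding vinner_def by (intro sum.cong) auto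

lemma vinner_zero_left: "(\<And>i. i < n \<Longrightarrow> x i = 0) \<Longrightarrow> vinner n x y = 0"
  unfolding vinner_def by simp

lemma vinner_self_nonneg: "0 \<le> vinner n x x"
  unfolding vinner_def by (intro sum_nonneg) simp

lemma vinner_self_eq_0_iff: "vinner n x x = 0 \<longleftrightarrow> (\<forall>i<n. x i = 0)"
  unfolding vinner_def by (subst sum_nonneg_eq_0_iff) auto

lemma vinner_self_pos_iff: "0 < vinner n x x \<longleftrightarrow> (\<exists>i<n. x i \<noteq> 0)"
  using vinner_self_nonneg[of n x] vinner_self_eq_0_iff[of n x] by force

lemma power2_coord_le_vinner_self: "i < n \<Longrightarrow> (x i)\<^sup>2 \<le> vinner n x x"
  unfolding vinner_def power2_eq_square by (rule member_le_sum) auto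

lemma vnorm_eq_L2_set: "vnorm n x = L2_set x {..<n}"
  unfolding vnorm_def vinner_def L2_set_def by (simp add: power2_eq_square)

lemma power2_vnorm: "(vnorm n x)\<^sup>2 = vinner n x x"
  unfolding vnorm_def by (simp add: vinner_self_nonneg)

lemma vnorm_nonneg: "0 \<le> vnorm n x"
  unfolding vnorm_def by (simp add: vinner_self_nonneg)

lemma vnorm_cong: "(\<And>i. i < n \<Longrightarrow> x i = x' i) \<Longrightarrow> vnorm n x = vnorm n x'"
  unfolding vnorm_def by (metis vinner_cong)

lemma vinner_Cauchy_Schwarz: "\<bar>vinner n x y\<bar> \<le> vnorm n x * vnorm n y"
proof -
  have "\<bar>vinner n x y\<bar> \<le> (\<Sum>i<n. \<bar>x i\<bar> * \<bar>y i\<bar>)"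
    unfolding vinner_def by (metis (no_types, lifting) abs_mult sum.cong sum_abs)
  also have "\<dots> \<le> vnorm n x * vnorm n y"
    unfolding vnorm_eq_L2_set by (rule L2_set_mult_ineq)
  finally show ?thesis .
qed

lemma vnorm_triangle: "vnorm n (\<lambda>i. x i + y i) \<le> vnorm n x + vnorm n y"
  unfolding vnorm_eq_L2_set by (rule L2_set_triangle_ineq)

lemma vnorm_scale: "vnorm n (\<lambda>i. a * x i) = \<bar>a\<bar> * vnorm n x"
  unfolding vnorm_def vinner_scale_left vinner_scale_right
  by (simp add: real_sqrt_mult mult.assoc[symmetric] flip: power2_eq_square)

lemma vnorm_diff_triangle: "vnorm n (\<lambda>i. x i - y i) \<le> vnorm n x + vnorm n y"
  using vnorm_triangle[of n x "\<lambda>i. -1 * y i"] unfolding vnorm_scale by simp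

lemma vnorm_normalize: "vnorm n x \<noteq> 0 \<Longrightarrow> vnorm n (\<lambda>i. x i / vnorm n x) = 1"
  using vnorm_scale[of n "1 / vnorm n x" x] vnorm_nonneg[of n x] by simp

lemma mat_vec_linear:
  "mat_vec n M (\<lambda>i. a * x i + b * y i) = (\<lambda>j. a * mat_vec n M x j + b * mat_vec n M y j)"
  unfolding mat_vec_def by (simp add: algebra_simps sum.distrib sum_distrib_left)

lemma mat_vec_scale: "mat_vec n M (\<lambda>i. a * x i) = (\<lambda>j. a * mat_vec n M x j)"
  using mat_vec_linear[of n M a x 0 x] by simp

lemma mat_vec_diff_mat: "mat_vec n (\<lambda>i j. M i j - N i j) x i = mat_vec n M x i - mat_vec n N x i"
  unfolding mat_vec_def by (simp add: algebra_simps sum_subtractf)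

lemma mat_vec_cong: "(\<And>i. i < n \<Longrightarrow> x i = x' i) \<Longrightarrow> mat_vec n M x = mat_vec n M x'"
  unfolding mat_vec_def by (intro ext sum.cong) auto

lemma sym_mat_vinner_mat_vec:
  assumes "sym_mat n M"
  shows "vinner n (mat_vec n M x) y = vinner n x (mat_vec n M y)"
proof -
  have "vinner n (mat_vec n M x) y = (\<Sum>i<n. \<Sum>j<n. M i j * x j * y i)"
    unfolding vinner_def mat_vec_def by (simp add: sum_distrib_right)
  also have "\<dots> = (\<Sum>j<n. \<Sum>i<n. M i j * x j * y i)" by (rule sum.swap)
  also have "\<dots> = (\<Sum>j<n. \<Sum>i<n. x j * (M j i * y i))"
    using assms unfolding sym_mat_def by (intro sum.cong refl) (auto simp: algebra_simps)
  also have "\<dots> = vinner n x (mat_vec n M y)"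
    unfolding vinner_def mat_vec_def by (simp add: sum_distrib_left)
  finally show ?thesis .
qed

lemma vnorm_mat_vec_le_row_norms: "vnorm n (mat_vec n M x) \<le> (\<Sum>i<n. vnorm n (M i)) * vnorm n x"
proof -
  have "vnorm n (mat_vec n M x) \<le> (\<Sum>i<n. \<bar>mat_vec n M x i\<bar>)"
    unfolding vnorm_eq_L2_set by (rule L2_set_le_sum_abs)
  also have "\<dots> \<le> (\<Sum>i<n. vnorm n (M i) * vnorm n x)"
  proof (rule sum_mono)
    fix i
    have "mat_vec n M x i = vinner n (M i) x" unfolding mat_vec_def vinner_def by simp
    then show "\<bar>mat_vec n M x i\<bar> \<le> vnorm n (M i) * vnorm n x"
      using vinner_Cauchy_Schwarz by simp
  qed
  finally show ?thesis by (simp add: sum_distrib_right)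
qed

lemma vnorm_mat_vec_le_spec_norm: "vnorm n (mat_vec n M x) \<le> spec_norm n M * vnorm n x"
proof (cases "vnorm n x = 0")
  case True
  then have "\<forall>i<n. x i = 0" using power2_vnorm[of n x] vinner_self_eq_0_iff by simp
  then have "mat_vec n M x = (\<lambda>i. 0)" by (simp add: mat_vec_def)
  then show ?thesis using True by (simp add: vnorm_def vinner_def)
next
  case False
  have "bdd_above {vnorm n (mat_vec n M x) | x. vnorm n x = 1}"
  proof (rule bdd_aboveI)
    fix y assume "y \<in> {vnorm n (mat_vec n M x) | x. vnorm n x = 1}"
    then obtain x where "y = vnorm n (mat_vec n M x)" "vnorm n x = 1" by blast
    then show "y \<le> (\<Sum>i<n. vnorm n (M i))"
      using vnorm_mat_vec_le_row_norms[of n M x] by simp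
  qed
  moreover have "vnorm n (\<lambda>i. x i / vnorm n x) = 1" using False by (rule vnorm_normalize)
  ultimately have "vnorm n (mat_vec n M (\<lambda>i. (1 / vnorm n x) * x i)) \<le> spec_norm n M"
    unfolding spec_norm_def by (intro cSup_upper) auto
  then have "(1 / vnorm n x) * vnorm n (mat_vec n M x) \<le> spec_norm n M"
    unfolding mat_vec_scale vnorm_scale using vnorm_nonneg[of n x] by simp
  then show ?thesis
    using False vnorm_nonneg[of n x] by (simp add: field_simps)
qed

section \<open>Rayleigh quotients orthogonal to two eigenvectors\<close>

lemma vinner_mat_vec_scale:
  "vinner n (\<lambda>i. a * y i) (mat_vec n T (\<lambda>i. a * y i)) = a\<^sup>2 * vinner n y (mat_vec n T y)"
  by (simp add: mat_vec_scale vinner_scale_left vinner_scale_right power2_eq_square)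

lemma continuous_on_vinner:
  assumes "\<And>i. continuous_on S (\<lambda>y. u y i)" "\<And>i. continuous_on S (\<lambda>y. w y i)"
  shows "continuous_on S (\<lambda>y. vinner n (u y) (w y))"
  unfolding vinner_def by (intro continuous_intros assms)

lemma continuous_on_coordinate: "continuous_on S (\<lambda>x::nat \<Rightarrow> real. x i)"
  by (rule continuous_on_subset[OF continuous_on_product_coordinates subset_UNIV])

lemma continuous_on_mat_vec: "continuous_on S (\<lambda>y. mat_vec n T y i)"
  unfolding mat_vec_def by (intro continuous_intros continuous_on_coordinate)

abbreviation unit_cube :: "nat \<Rightarrow> (nat \<Rightarrow> real) set" where
  "unit_cube n \<equiv> Pi UNIV (\<lambda>i. if i < n then {-1..1} else {0})"

lemma compact_unit_cube: "compact (unit_cube n)"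
proof -
  have "compactin (product_topology (\<lambda>i. euclidean) UNIV)
      (PiE UNIV (\<lambda>i::nat. if i < n then {-1..1::real} else {0}))"
    by (subst compactin_PiE) auto
  then show ?thesis by (simp add: euclidean_product_topology PiE_UNIV_domain)
qed

lemma compact_unit_sphere_perp:
  "compact (unit_cube n \<inter> {y. vinner n y y = 1 \<and> vinner n y u1 = 0 \<and> vinner n y u2 = 0})"
proof -
  have "closed {y. vinner n y y = 1 \<and> vinner n y u1 = 0 \<and> vinner n y u2 = 0}"
    by (intro closed_Collect_conj closed_Collect_eq continuous_on_vinner
        continuous_on_coordinate continuous_on_const)
  then show ?thesis using compact_unit_cube by blast
qed

lemma truncation_mem_unit_sphere_perp:
  assumes "vinner n y y = 1" "vinner n y u1 = 0" "vinner n y u2 = 0"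
  shows "(\<lambda>i. if i < n then y i else 0) \<in>
    unit_cube n \<inter> {y. vinner n y y = 1 \<and> vinner n y u1 = 0 \<and> vinner n y u2 = 0}"
    (is "?y \<in> _")
proof -
  have "\<bar>y i\<bar> \<le> 1" if "i < n" for i
    using power2_coord_le_vinner_self[OF that, of y] assms(1) by (simp add: abs_square_le_1)
  then have "?y \<in> unit_cube n" by (auto simp: abs_le_iff)
  moreover have "vinner n ?y ?y = vinner n y y" "vinner n ?y u1 = vinner n y u1"
    "vinner n ?y u2 = vinner n y u2"
    by (rule vinner_cong; simp)+
  ultimately show ?thesis using assms by simp
qed

text \<open>The unit sphere of the orthogonal complement is compact once the coordinates
  \<open>\<ge> n\<close>, which no \<open>vinner n\<close> or \<open>mat_vec n\<close> sees, are set to zero.\<close>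
lemma rayleigh_max_perp_exists:
  assumes y0: "\<exists>i<n. y0 i \<noteq> 0" "vinner n y0 u1 = 0" "vinner n y0 u2 = 0"
  shows "\<exists>v. vinner n v v = 1 \<and> vinner n v u1 = 0 \<and> vinner n v u2 = 0 \<and>
    (\<forall>y. vinner n y u1 = 0 \<and> vinner n y u2 = 0 \<longrightarrow>
       vinner n y (mat_vec n T y) \<le> vinner n v (mat_vec n T v) * vinner n y y)"
proof -
  define K where "K = unit_cube n \<inter> {y. vinner n y y = 1 \<and> vinner n y u1 = 0 \<and> vinner n y u2 = 0}"
  define f where "f y = vinner n y (mat_vec n T y)" for y
  define trunc where "trunc y = (\<lambda>i. if i < n then y i else 0)" for y :: "nat \<Rightarrow> real"
  have f_trunc: "f (trunc y) = f y" for y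
  proof -
    have "mat_vec n T (trunc y) = mat_vec n T y" by (rule mat_vec_cong) (simp add: trunc_def)
    then show ?thesis unfolding f_def by (intro vinner_cong) (simp_all add: trunc_def)
  qed
  have normalize_in_K: "trunc (\<lambda>i. (1 / vnorm n y) * y i) \<in> K" and
    f_normalize: "f (\<lambda>i. (1 / vnorm n y) * y i) = f y / vinner n y y"
    if "\<exists>i<n. y i \<noteq> 0" "vinner n y u1 = 0" "vinner n y u2 = 0" for y
  proof -
    have "0 < vinner n y y" using that(1) vinner_self_pos_iff by blast
    then have "vnorm n y \<noteq> 0" by (simp add: vnorm_def)
    then have "vnorm n (\<lambda>i. (1 / vnorm n y) * y i) = 1"
      using vnorm_normalize[of n y] by simp
    then have "vinner n (\<lambda>i. (1 / vnorm n y) * y i) (\<lambda>i. (1 / vnorm n y) * y i) = 1"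
      by (metis power2_vnorm power_one)
    then show "trunc (\<lambda>i. (1 / vnorm n y) * y i) \<in> K"
      unfolding K_def trunc_def using that(2,3)
      by (intro truncation_mem_unit_sphere_perp) (simp_all only: vinner_scale_left mult_zero_right)
    have "f (\<lambda>i. (1 / vnorm n y) * y i) = (1 / vnorm n y)\<^sup>2 * f y"
      unfolding f_def by (rule vinner_mat_vec_scale)
    then show "f (\<lambda>i. (1 / vnorm n y) * y i) = f y / vinner n y y"
      by (simp add: power2_vnorm power_divide)
  qed
  have "compact K" unfolding K_def by (rule compact_unit_sphere_perp)
  moreover have "K \<noteq> {}" using normalize_in_K[OF y0] by blast
  moreover have "continuous_on K f"
    unfolding f_def by (intro continuous_on_vinner continuous_on_coordinate continuous_on_mat_vec)
  ultimately obtain v where v: "v \<in> K" and v_max: "\<And>y. y \<in> K \<Longrightarrow> f y \<le> f v"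
    using continuous_attains_sup[of K f] by blast
  have "f y \<le> f v * vinner n y y" if "vinner n y u1 = 0" "vinner n y u2 = 0" for y
  proof (cases "\<exists>i<n. y i \<noteq> 0")
    case True
    then have "f y / vinner n y y \<le> f v"
      using v_max[OF normalize_in_K[OF True that]] by (simp only: f_trunc f_normalize[OF True that])
    moreover have "0 < vinner n y y" using True vinner_self_pos_iff by blast
    ultimately show ?thesis by (simp add: divide_le_eq)
  next
    case False
    then have "f y = 0" "vinner n y y = 0" unfolding f_def by (auto intro: vinner_zero_left)
    then show ?thesis by simp
  qed
  moreover have "vinner n v v = 1" "vinner n v u1 = 0" "vinner n v u2 = 0"
    using v unfolding K_def by auto
  ultimately show ?thesis unfolding f_def by blast
qed

lemma nonneg_le_quadratic_eq_0:
  fixes a b :: real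
  assumes "0 \<le> a" and "\<And>t. 2 * t * a \<le> t\<^sup>2 * b"
  shows "a = 0"
proof (rule ccontr)
  assume "a \<noteq> 0"
  with assms(1) have a: "0 < a" by simp
  define t where "t = a / (\<bar>b\<bar> + 1)"
  have t: "0 < t" unfolding t_def using a by simp
  have "2 * t * a \<le> t * (t * b)" using assms(2)[of t] by (simp add: power2_eq_square)
  then have "2 * a \<le> t * b" using t by simp
  also have "\<dots> \<le> t * \<bar>b\<bar>" using t by (simp add: mult_left_mono)
  also have "\<dots> < a" unfolding t_def using a by (simp add: field_simps)
  finally show False using a by simp
qed

lemma sym_mat_mat_vec_perp_eigvec:
  assumes "sym_mat n T" "\<forall>i<n. mat_vec n T u i = lam * u i" "vinner n v u = 0"
  shows "vinner n (mat_vec n T v) u = 0"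
proof -
  have "vinner n (mat_vec n T v) u = vinner n v (\<lambda>i. lam * u i)"
    unfolding sym_mat_vinner_mat_vec[OF assms(1)] using assms(2) by (intro vinner_cong) auto
  then show ?thesis using assms(3) by (simp add: vinner_scale_right)
qed

text \<open>First-order optimality: perturbing the maximiser \<open>v\<close> along
  \<open>h = T v - \<mu> v\<close>, which stays in the complement, changes the quadratic form by
  \<open>2 t |h|\<^sup>2 + O(t\<^sup>2)\<close>.\<close>
lemma rayleigh_maximizer_eigvec:
  assumes sym: "sym_mat n T"
    and e1: "\<forall>i<n. mat_vec n T u1 i = l1 * u1 i" and e2: "\<forall>i<n. mat_vec n T u2 i = l2 * u2 i"
    and v: "vinner n v v = 1" "vinner n v u1 = 0" "vinner n v u2 = 0"
    and v_max: "\<forall>y. vinner n y u1 = 0 \<and> vinner n y u2 = 0 \<longrightarrow>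
       vinner n y (mat_vec n T y) \<le> vinner n v (mat_vec n T v) * vinner n y y"
  shows "\<forall>i<n. mat_vec n T v i = vinner n v (mat_vec n T v) * v i"
proof -
  define \<mu> where "\<mu> = vinner n v (mat_vec n T v)"
  define h where "h = (\<lambda>i. mat_vec n T v i - \<mu> * v i)"
  have h_perp: "vinner n h u1 = 0" "vinner n h u2 = 0"
    using sym_mat_mat_vec_perp_eigvec[OF sym e1 v(2)] sym_mat_mat_vec_perp_eigvec[OF sym e2 v(3)] v
    unfolding h_def by (simp_all add: vinner_diff_left vinner_scale_left)
  have hv: "vinner n h v = 0"
    unfolding h_def using v(1) by (simp add: vinner_diff_left vinner_scale_left \<mu>_def vinner_commute)
  have hTv: "vinner n h (mat_vec n T v) = vinner n h h"
  proof -
    have "vinner n h (mat_vec n T v) = vinner n h (\<lambda>i. h i + \<mu> * v i)"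
      by (intro vinner_cong) (auto simp: h_def)
    then show ?thesis by (simp add: vinner_add_right vinner_scale_right hv)
  qed
  have vTh: "vinner n v (mat_vec n T h) = vinner n h h"
    using sym_mat_vinner_mat_vec[OF sym, of v h] vinner_commute hTv by metis
  have "2 * t * vinner n h h \<le> t\<^sup>2 * (\<mu> * vinner n h h - vinner n h (mat_vec n T h))" for t
  proof -
    define y where "y = (\<lambda>i. 1 * v i + t * h i)"
    have "vinner n y u1 = 0" "vinner n y u2 = 0"
      unfolding y_def by (simp_all add: vinner_add_left vinner_scale_left v h_perp)
    then have "vinner n y (mat_vec n T y) \<le> \<mu> * vinner n y y" using v_max \<mu>_def by blast
    moreover have "vinner n y y = 1 + t\<^sup>2 * vinner n h h"
      unfolding y_def by (simp add: vinner_bilinear v(1) hv vinner_commute[of n v h] power2_eq_square)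
    moreover have "vinner n y (mat_vec n T y) =
        \<mu> + 2 * t * vinner n h h + t\<^sup>2 * vinner n h (mat_vec n T h)"
    proof -
      have "vinner n v (mat_vec n T v) = \<mu>" by (simp add: \<mu>_def)
      then show ?thesis unfolding y_def mat_vec_linear
        by (simp add: vinner_add_left vinner_add_right vinner_scale_left vinner_scale_right
            hTv vTh power2_eq_square algebra_simps)
    qed
    ultimately show ?thesis by (simp add: algebra_simps)
  qed
  then have "vinner n h h = 0"
    by (rule nonneg_le_quadratic_eq_0[OF vinner_self_nonneg])
  then have "\<forall>i<n. h i = 0" by (simp only: vinner_self_eq_0_iff)
  then show ?thesis unfolding h_def \<mu>_def by simp
qed

lemma rayleigh_perp2_le_abs_eigval:
  assumes sym: "sym_mat n T"
    and ea: "\<forall>i<n. mat_vec n T ua i = la * ua i" and eb: "\<forall>i<n. mat_vec n T ub i = lb * ub i"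
    and top: "\<forall>v \<mu>. (\<exists>i<n. v i \<noteq> 0) \<and> (\<forall>i<n. mat_vec n T v i = \<mu> * v i) \<and>
                 vinner n v ua = 0 \<and> vinner n v ub = 0 \<longrightarrow> \<bar>\<mu>\<bar> \<le> \<bar>la\<bar>"
    and y: "vinner n y ua = 0" "vinner n y ub = 0"
  shows "vinner n y (mat_vec n T y) \<le> \<bar>la\<bar> * vinner n y y"
proof (cases "\<exists>i<n. y i \<noteq> 0")
  case True
  then obtain v where v: "vinner n v v = 1" "vinner n v ua = 0" "vinner n v ub = 0"
    and v_max: "\<forall>y. vinner n y ua = 0 \<and> vinner n y ub = 0 \<longrightarrow>
       vinner n y (mat_vec n T y) \<le> vinner n v (mat_vec n T v) * vinner n y y"
    using rayleigh_max_perp_exists[OF True y] by blast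
  define \<mu> where "\<mu> = vinner n v (mat_vec n T v)"
  have "\<forall>i<n. mat_vec n T v i = \<mu> * v i"
    unfolding \<mu>_def by (rule rayleigh_maximizer_eigvec[OF sym ea eb v v_max])
  moreover have "\<exists>i<n. v i \<noteq> 0" using v(1) vinner_self_pos_iff[of n v] by simp
  ultimately have "\<bar>\<mu>\<bar> \<le> \<bar>la\<bar>" using top v(2,3) by blast
  then have "\<mu> * vinner n y y \<le> \<bar>la\<bar> * vinner n y y"
    using vinner_self_nonneg[of n y] by (intro mult_right_mono) auto
  then show ?thesis using v_max y unfolding \<mu>_def by fastforce
next
  case False
  then show ?thesis by (simp add: vinner_zero_left)
qed

text \<open>The component along the unit eigenvector \<open>ua\<close> splits off, and on the remaining
  part, orthogonal to both \<open>ua\<close> and \<open>ub\<close>, the previous lemma applies.\<close>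
lemma rayleigh_le_abs_eigval_perp:
  assumes sym: "sym_mat n T" and ua: "vinner n ua ua = 1" "vinner n ua ub = 0"
    and ea: "\<forall>i<n. mat_vec n T ua i = la * ua i" and eb: "\<forall>i<n. mat_vec n T ub i = lb * ub i"
    and top: "\<forall>v \<mu>. (\<exists>i<n. v i \<noteq> 0) \<and> (\<forall>i<n. mat_vec n T v i = \<mu> * v i) \<and>
                 vinner n v ua = 0 \<and> vinner n v ub = 0 \<longrightarrow> \<bar>\<mu>\<bar> \<le> \<bar>la\<bar>"
    and x: "vinner n x ub = 0"
  shows "vinner n x (mat_vec n T x) \<le> \<bar>la\<bar> * vinner n x x"
proof -
  define a where "a = vinner n x ua"
  define y where "y = (\<lambda>i. x i - a * ua i)"
  have y_perp: "vinner n y ua = 0" "vinner n y ub = 0"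
    unfolding y_def a_def by (simp_all add: vinner_diff_left vinner_scale_left ua x)
  have x_eq: "x = (\<lambda>i. a * ua i + 1 * y i)" unfolding y_def by auto
  have uTu: "vinner n ua (mat_vec n T ua) = la"
    using ea ua(1) vinner_cong[of n ua ua "mat_vec n T ua" "\<lambda>i. la * ua i"]
    by (simp add: vinner_scale_right)
  have yTu: "vinner n y (mat_vec n T ua) = 0"
    using ea y_perp(1) vinner_cong[of n y y "mat_vec n T ua" "\<lambda>i. la * ua i"]
    by (simp add: vinner_scale_right)
  have uTy: "vinner n ua (mat_vec n T y) = 0"
    using sym_mat_vinner_mat_vec[OF sym, of ua y] sym_mat_vinner_mat_vec[OF sym, of y ua] yTu
    by (metis vinner_commute)
  have "vinner n x (mat_vec n T x) = a\<^sup>2 * la + vinner n y (mat_vec n T y)"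
    by (subst (1 2) x_eq, unfold mat_vec_linear)
      (simp add: vinner_bilinear uTu yTu uTy power2_eq_square)
  moreover have "vinner n x x = a\<^sup>2 + vinner n y y"
    by (subst (1 2) x_eq)
      (simp add: vinner_bilinear ua(1) y_perp(1) vinner_commute[of n ua y] power2_eq_square)
  moreover have "vinner n y (mat_vec n T y) \<le> \<bar>la\<bar> * vinner n y y"
    by (rule rayleigh_perp2_le_abs_eigval[OF sym ea eb top y_perp])
  moreover have "a\<^sup>2 * la \<le> a\<^sup>2 * \<bar>la\<bar>" by (intro mult_left_mono) auto
  ultimately show ?thesis by (simp add: algebra_simps)
qed

lemma exists_unit_perp_real2: "\<exists>e1 e2::real. e1\<^sup>2 + e2\<^sup>2 = 1 \<and> e1 * b1 + e2 * b2 = 0"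
proof (cases "b1 = 0 \<and> b2 = 0")
  case True
  then show ?thesis by (intro exI[of _ 1] exI[of _ 0]) simp
next
  case False
  define t where "t = sqrt (b1\<^sup>2 + b2\<^sup>2)"
  have pos: "0 < b1\<^sup>2 + b2\<^sup>2" using False by (simp add: sum_power2_gt_zero_iff)
  then have t: "t\<^sup>2 = b1\<^sup>2 + b2\<^sup>2" "t \<noteq> 0" unfolding t_def by auto
  have "(- b2 / t)\<^sup>2 + (b1 / t)\<^sup>2 = (b1\<^sup>2 + b2\<^sup>2) / t\<^sup>2"
    by (simp add: power_divide add_divide_distrib)
  then have "(- b2 / t)\<^sup>2 + (b1 / t)\<^sup>2 = 1" using t pos by (simp only: divide_self)
  moreover have "(- b2 / t) * b1 + (b1 / t) * b2 = 0" by (simp add: field_simps)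
  ultimately show ?thesis by blast
qed

lemma Cauchy_Schwarz_real2: "(e1 * a + e2 * b)\<^sup>2 \<le> (e1\<^sup>2 + e2\<^sup>2) * (a\<^sup>2 + b\<^sup>2)" for e1 e2 a b :: real
proof -
  have "(e1\<^sup>2 + e2\<^sup>2) * (a\<^sup>2 + b\<^sup>2) - (e1 * a + e2 * b)\<^sup>2 = (e1 * b - e2 * a)\<^sup>2"
    by (simp add: power2_eq_square algebra_simps)
  then show ?thesis by (metis diff_ge_0_iff_ge zero_le_power2)
qed

lemma min_hamming_le_card:
  assumes z: "\<forall>i<n. z i = 1 \<or> z i = -1" and zt: "\<forall>i<n. zt i = 1 \<or> zt i = -1"
    and agree: "\<And>i j. i < n \<Longrightarrow> j < n \<Longrightarrow> i \<notin> B \<Longrightarrow> j \<notin> B \<Longrightarrow> zt i = zt j \<longleftrightarrow> z i = z j"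
    and "finite B"
  shows "min (hamming n zt z) (hamming n (\<lambda>i. - zt i) z) \<le> card B"
proof (cases "\<exists>i0<n. i0 \<notin> B")
  case True
  then obtain i0 where i0: "i0 < n" "i0 \<notin> B" by blast
  have "{i. i < n \<and> zt i \<noteq> z i} \<subseteq> B \<or> {i. i < n \<and> - zt i \<noteq> z i} \<subseteq> B"
    using z zt agree[OF _ i0(1) _ i0(2)] i0 by (smt (verit) mem_Collect_eq subsetI)
  then show ?thesis
    unfolding hamming_def using \<open>finite B\<close> by (metis card_mono min.coboundedI1 min.coboundedI2)
next
  case False
  then have "{i. i < n \<and> zt i \<noteq> z i} \<subseteq> B" by blast
  then show ?thesis unfolding hamming_def using \<open>finite B\<close> by (simp add: card_mono min.coboundedI1)
qed

lemma min_hamming_le_half: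
  assumes "\<forall>i<n. z i = 1 \<or> z i = -1" and "\<forall>i<n. zt i = 1 \<or> zt i = -1"
  shows "2 * min (hamming n zt z) (hamming n (\<lambda>i. - zt i) z) \<le> n"
proof -
  have "{i. i < n \<and> zt i \<noteq> z i} \<union> {i. i < n \<and> - zt i \<noteq> z i} = {..<n}"
    "{i. i < n \<and> zt i \<noteq> z i} \<inter> {i. i < n \<and> - zt i \<noteq> z i} = {}"
    using assms by force+
  then have "hamming n zt z + hamming n (\<lambda>i. - zt i) z = n"
    unfolding hamming_def
    by (metis card_Un_disjoint card_lessThan finite_Collect_conjI finite_Collect_less_nat)
  then show ?thesis by linarith
qed

lemma misclass_loss_le_half:
  assumes "\<forall>i<n. z i = 1 \<or> z i = -1" and "\<forall>i<n. zt i = 1 \<or> zt i = -1"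
  shows "misclass_loss n zt z \<le> 1/2"
  using min_hamming_le_half[OF assms] unfolding misclass_loss_def
  by (cases "n = 0") (simp_all add: field_simps)

lemma power2_diff_le_twice: "(a - b)\<^sup>2 \<le> 2 * (v - a)\<^sup>2 + 2 * (v - b)\<^sup>2" for a b v :: real
proof -
  have "2 * (v - a)\<^sup>2 + 2 * (v - b)\<^sup>2 - (a - b)\<^sup>2 = (2 * v - a - b)\<^sup>2"
    by (simp add: power2_eq_square algebra_simps)
  then show ?thesis by (metis diff_ge_0_iff_ge zero_le_power2)
qed

definition spectral_kmeans :: "nat \<Rightarrow> (nat \<Rightarrow> nat \<Rightarrow> real) \<Rightarrow> real \<Rightarrow> (nat \<Rightarrow> int) \<Rightarrow> bool" where
  "spectral_kmeans n T \<epsilon> zt \<longleftrightarrow>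
     (\<exists>u1 u2 k X.
        top2_eigvecs n T u1 u2 \<and> (\<forall>i<n. k i < 2) \<and>
        (\<forall>k' X'. (\<forall>i<n. k' i < 2) \<longrightarrow>
           kmeans_cost n u1 u2 k X \<le> (1 + \<epsilon>) * kmeans_cost n u1 u2 k' X') \<and>
        (\<forall>i<n. zt i = (if k i = 0 then 1 else -1)))"

lemma alg1_output_iff_spectral_kmeans:
  "alg1_output n L A \<omega> p \<gamma> \<epsilon> zt \<longleftrightarrow> spectral_kmeans n (trim n L \<omega> p \<gamma> (Abar L \<omega> A)) \<epsilon> zt"
  unfolding alg1_output_def spectral_kmeans_def ..

section \<open>Perturbed two-block matrices\<close>

definition two_block_mat :: "(nat \<Rightarrow> int) \<Rightarrow> real \<Rightarrow> real \<Rightarrow> nat \<Rightarrow> nat \<Rightarrow> real" where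
  "two_block_mat z s d = (\<lambda>i j. if z i = z j then s else d)"

locale perturbed_two_block =
  fixes n :: nat and T :: "nat \<Rightarrow> nat \<Rightarrow> real" and z :: "nat \<Rightarrow> int" and s d \<eta> :: real
  assumes sym_T: "sym_mat n T"
    and labels: "\<forall>i<n. z i = 1 \<or> z i = -1"
    and balanced_pos: "real n \<le> 6 * real (card {i. i < n \<and> z i = 1})"
    and balanced_neg: "real n \<le> 6 * real (card {i. i < n \<and> z i = -1})"
    and n_pos: "0 < n"
    and d_nonneg: "0 \<le> d" and d_less_s: "d < s"
    and perturbation:
      "\<And>x. vnorm n (\<lambda>i. mat_vec n T x i - mat_vec n (two_block_mat z s d) x i) \<le> \<eta> * vnorm n x"
begin

definition "comm_pos = {i. i < n \<and> z i = 1}"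
definition "comm_neg = {i. i < n \<and> z i = -1}"
definition "size_pos = real (card comm_pos)"
definition "size_neg = real (card comm_neg)"

lemma finite_comm: "finite comm_pos" "finite comm_neg"
  unfolding comm_pos_def comm_neg_def by auto

lemma sum_lessThan_split_comm: "(\<Sum>i<n. f i) = sum f comm_pos + sum f comm_neg"
proof -
  have "{..<n} = comm_pos \<union> comm_neg" "comm_pos \<inter> comm_neg = {}"
    unfolding comm_pos_def comm_neg_def using labels by auto
  then show ?thesis using finite_comm by (simp add: sum.union_disjoint)
qed

lemma size_pos_ge: "real n \<le> 6 * size_pos" and size_neg_ge: "real n \<le> 6 * size_neg"
  using balanced_pos balanced_neg unfolding size_pos_def size_neg_def comm_pos_def comm_neg_def .

lemma size_pos_pos: "0 < size_pos" and size_neg_pos: "0 < size_neg"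
  using size_pos_ge size_neg_ge n_pos by linarith+

lemma size_pos_plus_size_neg: "size_pos + size_neg = real n"
  using sum_lessThan_split_comm[of "\<lambda>_. 1 :: real"] unfolding size_pos_def size_neg_def by simp

lemma sum_comm_block_const:
  "sum (\<lambda>i. if z i = 1 then a else b) comm_pos = a * size_pos"
  "sum (\<lambda>i. if z i = 1 then a else b) comm_neg = b * size_neg"
  unfolding size_pos_def size_neg_def comm_pos_def comm_neg_def by simp_all

lemma vinner_block_const:
  assumes "\<And>i. i < n \<Longrightarrow> y i = (if z i = 1 then a else b)"
  shows "vinner n x y = a * sum x comm_pos + b * sum x comm_neg"
proof -
  have "vinner n x y = sum (\<lambda>i. x i * y i) comm_pos + sum (\<lambda>i. x i * y i) comm_neg"
    unfolding vinner_def by (rule sum_lessThan_split_comm)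
  also have "\<dots> = sum (\<lambda>i. a * x i) comm_pos + sum (\<lambda>i. b * x i) comm_neg"
    using assms by (intro arg_cong2[where f = "(+)"] sum.cong) (auto simp: comm_pos_def comm_neg_def)
  finally show ?thesis by (simp add: sum_distrib_left)
qed

lemma mat_vec_two_block:
  assumes "i < n"
  shows "mat_vec n (two_block_mat z s d) x i =
    (if z i = 1 then s * sum x comm_pos + d * sum x comm_neg
     else d * sum x comm_pos + s * sum x comm_neg)"
proof -
  have "mat_vec n (two_block_mat z s d) x i =
      vinner n x (\<lambda>j. if z j = 1 then (if z i = 1 then s else d) else (if z i = 1 then d else s))"
    unfolding mat_vec_def vinner_def two_block_mat_def
  proof (intro sum.cong refl)
    fix j assume "j \<in> {..<n}"
    then have "z i = 1 \<or> z i = -1" "z j = 1 \<or> z j = -1" using labels assms by auto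
    then show "(if z i = z j then s else d) * x j =
        x j * (if z j = 1 then (if z i = 1 then s else d) else (if z i = 1 then d else s))"
      by auto
  qed
  also have "\<dots> = (if z i = 1 then s * sum x comm_pos + d * sum x comm_neg
      else d * sum x comm_pos + s * sum x comm_neg)"
    by (subst vinner_block_const) auto
  finally show ?thesis .
qed

lemma rayleigh_ge_two_block:
  "vinner n x (mat_vec n (two_block_mat z s d) x) - \<eta> * vinner n x x \<le> vinner n x (mat_vec n T x)"
proof -
  define R where "R = vinner n x (\<lambda>i. mat_vec n T x i - mat_vec n (two_block_mat z s d) x i)"
  have "\<bar>R\<bar> \<le> vnorm n x * (\<eta> * vnorm n x)"
    unfolding R_def using vinner_Cauchy_Schwarz perturbation vnorm_nonneg
    by (meson mult_left_mono order_trans)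
  also have "\<dots> = \<eta> * vinner n x x" by (simp add: power2_vnorm[symmetric] power2_eq_square)
  finally show ?thesis unfolding R_def vinner_diff_right by linarith
qed

lemma perturbation_nonneg: "0 \<le> \<eta>"
proof -
  have "0 < vinner n (\<lambda>_. 1) (\<lambda>_. 1)" using n_pos by (simp add: vinner_def)
  then have "0 < vnorm n (\<lambda>_. 1)" by (simp add: vnorm_def)
  moreover have "0 \<le> \<eta> * vnorm n (\<lambda>_. 1)"
    using perturbation[of "\<lambda>_. 1"] vnorm_nonneg order_trans by blast
  ultimately show ?thesis by (simp add: zero_le_mult_iff)
qed

text \<open>The witness is block-constant: two free values against one linear constraint.\<close>
lemma block_vec_perp_rayleigh_ge:
  "\<exists>x. (\<exists>i<n. x i \<noteq> 0) \<and> vinner n x u = 0 \<and>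
     (s - d) * real n / 6 * vinner n x x \<le> vinner n x (mat_vec n (two_block_mat z s d) x)"
proof -
  obtain a b where ab: "a * sum u comm_pos + b * sum u comm_neg = 0" and nz: "a \<noteq> 0 \<or> b \<noteq> 0"
  proof (cases "sum u comm_pos = 0 \<and> sum u comm_neg = 0")
    case True then show ?thesis using that[of 1 0] by simp
  next
    case False then show ?thesis
      using that[of "sum u comm_neg" "- sum u comm_pos"] by (auto simp: algebra_simps)
  qed
  define x where "x = (\<lambda>i. if z i = 1 then a else b)"
  have sums: "sum x comm_pos = a * size_pos" "sum x comm_neg = b * size_neg"
    unfolding x_def by (rule sum_comm_block_const)+
  have "vinner n x x = a * sum x comm_pos + b * sum x comm_neg"
    by (rule vinner_block_const) (simp add: x_def)
  then have xx: "vinner n x x = a\<^sup>2 * size_pos + b\<^sup>2 * size_neg"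
    by (simp add: sums power2_eq_square)
  have "vinner n u x = 0"
    using ab by (subst vinner_block_const[of x a b]) (simp_all add: x_def)
  then have "vinner n x u = 0" by (simp add: vinner_commute)
  moreover have "\<exists>i<n. x i \<noteq> 0"
  proof -
    have "0 < a\<^sup>2 * size_pos + b\<^sup>2 * size_neg"
      using nz size_pos_pos size_neg_pos by (auto intro: add_pos_nonneg add_nonneg_pos)
    then show ?thesis using xx vinner_self_pos_iff by metis
  qed
  moreover have "(s - d) * real n / 6 * vinner n x x \<le> vinner n x (mat_vec n (two_block_mat z s d) x)"
  proof -
    have "vinner n x (mat_vec n (two_block_mat z s d) x) =
        (s * sum x comm_pos + d * sum x comm_neg) * sum x comm_pos +
        (d * sum x comm_pos + s * sum x comm_neg) * sum x comm_neg"
      by (rule vinner_block_const) (simp add: mat_vec_two_block)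
    then have xPx: "vinner n x (mat_vec n (two_block_mat z s d) x) =
        d * (a * size_pos + b * size_neg)\<^sup>2 +
        (s - d) * (a\<^sup>2 * size_pos * size_pos + b\<^sup>2 * size_neg * size_neg)"
      unfolding sums by (simp add: power2_eq_square algebra_simps)
    have "a\<^sup>2 * size_pos * (real n / 6) \<le> a\<^sup>2 * size_pos * size_pos"
      "b\<^sup>2 * size_neg * (real n / 6) \<le> b\<^sup>2 * size_neg * size_neg"
      using size_pos_ge size_neg_ge size_pos_pos size_neg_pos by (intro mult_left_mono; simp)+
    then have "(s - d) * (real n / 6 * vinner n x x)
        \<le> (s - d) * (a\<^sup>2 * size_pos * size_pos + b\<^sup>2 * size_neg * size_neg)"
      using d_less_s unfolding xx by (intro mult_left_mono) (auto simp: algebra_simps)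
    moreover have "0 \<le> d * (a * size_pos + b * size_neg)\<^sup>2" using d_nonneg by simp
    ultimately show ?thesis unfolding xPx by simp
  qed
  ultimately show ?thesis by blast
qed

lemma abs_top_eigval_ge:
  assumes "vinner n ua ua = 1" "vinner n ua ub = 0"
    and "\<forall>i<n. mat_vec n T ua i = la * ua i" "\<forall>i<n. mat_vec n T ub i = lb * ub i"
    and "\<forall>v \<mu>. (\<exists>i<n. v i \<noteq> 0) \<and> (\<forall>i<n. mat_vec n T v i = \<mu> * v i) \<and>
                 vinner n v ua = 0 \<and> vinner n v ub = 0 \<longrightarrow> \<bar>\<mu>\<bar> \<le> \<bar>la\<bar>"
  shows "(s - d) * real n / 6 - \<eta> \<le> \<bar>la\<bar>"
proof -
  obtain x where x: "\<exists>i<n. x i \<noteq> 0" "vinner n x ub = 0"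
    and x_low: "(s - d) * real n / 6 * vinner n x x \<le> vinner n x (mat_vec n (two_block_mat z s d) x)"
    using block_vec_perp_rayleigh_ge by blast
  have "((s - d) * real n / 6 - \<eta>) * vinner n x x \<le> vinner n x (mat_vec n T x)"
    using x_low rayleigh_ge_two_block[of x] by (simp add: algebra_simps)
  also have "\<dots> \<le> \<bar>la\<bar> * vinner n x x"
    by (rule rayleigh_le_abs_eigval_perp[OF sym_T assms x(2)])
  finally show ?thesis using x(1) vinner_self_pos_iff[of n x] by simp
qed

definition "centroid_pos u = sum u comm_pos / size_pos"
definition "centroid_neg u = sum u comm_neg / size_neg"
definition "block_mean u = (\<lambda>i. if z i = 1 then centroid_pos u else centroid_neg u)"
definition "block_residual u = (\<lambda>i. u i - block_mean u i)"

lemma sum_block_residual: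
  "sum (block_residual u) comm_pos = 0" "sum (block_residual u) comm_neg = 0"
  using size_pos_pos size_neg_pos
  by (simp_all add: block_residual_def block_mean_def centroid_pos_def centroid_neg_def
      sum_subtractf sum_comm_block_const)

text \<open>The residual \<open>r = u - block_mean u\<close> is orthogonal to every block-constant vector, in
  particular to \<open>block_mean u\<close> and to the image of \<open>u\<close> under the block matrix; hence
  \<open>\<lambda> |r|\<^sup>2 = \<langle>r, T u\<rangle> = \<langle>r, (T - block matrix) u\<rangle>\<close>.\<close>
lemma eigvec_residual_le:
  assumes u: "vinner n u u = 1" and eig: "\<forall>i<n. mat_vec n T u i = lam * u i"
  shows "\<bar>lam\<bar> * vinner n (block_residual u) (block_residual u)
    \<le> \<eta> * vnorm n (block_residual u)"
proof -
  define r where "r = block_residual u"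
  have r_block_const: "vinner n r y = 0" if "\<And>i. i < n \<Longrightarrow> y i = (if z i = 1 then a else b)" for y a b
    using sum_block_residual vinner_block_const[OF that, of r] unfolding r_def by simp
  have "vinner n r u = vinner n r (\<lambda>i. r i + block_mean u i)" by (simp add: r_def block_residual_def)
  also have "\<dots> = vinner n r r" by (simp add: vinner_add_right r_block_const block_mean_def)
  finally have "vinner n r (mat_vec n T u) = lam * vinner n r r"
    using eig vinner_cong[of n r r "mat_vec n T u" "\<lambda>i. lam * u i"] by (simp add: vinner_scale_right)
  moreover have "vinner n r (mat_vec n (two_block_mat z s d) u) = 0"
    by (rule r_block_const) (simp add: mat_vec_two_block)
  moreover have "vnorm n u = 1" using u by (simp add: vnorm_def)
  then have "\<bar>vinner n r (\<lambda>i. mat_vec n T u i - mat_vec n (two_block_mat z s d) u i)\<bar>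
      \<le> \<eta> * vnorm n r"
    using vinner_Cauchy_Schwarz[of n r] perturbation[of u] vnorm_nonneg[of n r]
    by (metis mult.commute mult_1_right mult_left_mono order_trans)
  ultimately show ?thesis
    unfolding r_def[symmetric] vinner_diff_right using vinner_self_nonneg[of n r] by (simp add: abs_mult)
qed

lemma vnorm_eigvec_residual_le:
  assumes "vinner n u u = 1" "\<forall>i<n. mat_vec n T u i = lam * u i"
    and large: "(s - d) * real n / 8 \<le> \<bar>lam\<bar>"
  shows "vnorm n (block_residual u) \<le> 8 * (\<eta> / ((s - d) * real n))"
proof -
  define r where "r = block_residual u"
  have sdn: "0 < (s - d) * real n" using d_less_s n_pos by simp
  then have lam: "0 < \<bar>lam\<bar>" using large by linarith
  have "\<bar>lam\<bar> * vnorm n r * vnorm n r \<le> \<eta> * vnorm n r"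
    using eigvec_residual_le[OF assms(1,2)] unfolding r_def[symmetric]
    by (simp add: power2_vnorm[symmetric] power2_eq_square mult.assoc)
  then have "\<bar>lam\<bar> * vnorm n r \<le> \<eta>"
    using vnorm_nonneg[of n r] perturbation_nonneg lam
    by (cases "vnorm n r = 0") (simp_all add: mult_le_cancel_right_pos)
  then have "vnorm n r \<le> \<eta> / \<bar>lam\<bar>" using lam by (simp add: field_simps)
  also have "\<dots> \<le> \<eta> / ((s - d) * real n / 8)"
    using large sdn perturbation_nonneg by (intro divide_left_mono) auto
  finally show ?thesis unfolding r_def by (simp add: mult.commute)
qed

text \<open>If both eigenvectors are close to block-constant vectors, the unit vector of their span
  vanishing on \<open>comm_neg\<close> forces the two centroids apart.\<close>
lemma centroid_separation:
  assumes u: "vinner n u1 u1 = 1" "vinner n u2 u2 = 1" "vinner n u1 u2 = 0"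
    and small: "vnorm n (block_residual u1) + vnorm n (block_residual u2) \<le> 2/5"
  shows "9/25 \<le> size_pos *
    ((centroid_pos u1 - centroid_neg u1)\<^sup>2 + (centroid_pos u2 - centroid_neg u2)\<^sup>2)"
proof -
  obtain e1 e2 where e: "e1\<^sup>2 + e2\<^sup>2 = 1" "e1 * centroid_neg u1 + e2 * centroid_neg u2 = 0"
    using exists_unit_perp_real2 by blast
  have e_le: "\<bar>e1\<bar> \<le> 1" "\<bar>e2\<bar> \<le> 1"
    using e(1) by (metis abs_square_le_1 le_add_same_cancel1 le_add_same_cancel2 zero_le_power2)+
  define x where "x = (\<lambda>i. e1 * u1 i + e2 * u2 i)"
  define c where "c = e1 * centroid_pos u1 + e2 * centroid_pos u2"
  define q where "q = (\<lambda>i. if z i = 1 then c else 0)"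
  define r where "r = (\<lambda>i. e1 * block_residual u1 i + e2 * block_residual u2 i)"
  have "vinner n x x = e1\<^sup>2 + e2\<^sup>2"
    unfolding x_def using u by (simp add: vinner_bilinear vinner_commute[of n u2 u1] power2_eq_square)
  then have "vnorm n x = 1" unfolding vnorm_def e(1) by simp
  moreover have "x = (\<lambda>i. q i + r i)"
    using e(2) by (auto simp: x_def q_def r_def c_def block_residual_def block_mean_def algebra_simps)
  moreover have "vnorm n r \<le> 2/5"
  proof -
    have "vnorm n r \<le> \<bar>e1\<bar> * vnorm n (block_residual u1) + \<bar>e2\<bar> * vnorm n (block_residual u2)"
      using vnorm_triangle[of n "\<lambda>i. e1 * block_residual u1 i" "\<lambda>i. e2 * block_residual u2 i"]
      unfolding r_def by (simp only: vnorm_scale)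
    also have "\<dots> \<le> vnorm n (block_residual u1) + vnorm n (block_residual u2)"
      using e_le vnorm_nonneg by (intro add_mono mult_left_le_one_le) auto
    finally show ?thesis using small by linarith
  qed
  ultimately have "3/5 \<le> vnorm n q" using vnorm_triangle[of n q r] by simp
  then have "(3/5)\<^sup>2 \<le> vinner n q q"
    by (metis power2_vnorm power_mono zero_le_divide_iff zero_le_numeral)
  also have "vinner n q q = c\<^sup>2 * size_pos"
    by (subst vinner_block_const[of _ c 0]) (simp_all add: q_def sum_comm_block_const power2_eq_square)
  also have "c\<^sup>2 \<le> (centroid_pos u1 - centroid_neg u1)\<^sup>2 + (centroid_pos u2 - centroid_neg u2)\<^sup>2"
  proof -
    have "c = e1 * (centroid_pos u1 - centroid_neg u1) + e2 * (centroid_pos u2 - centroid_neg u2)"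
      using e(2) by (simp add: c_def algebra_simps)
    then show ?thesis using Cauchy_Schwarz_real2 e(1) by (metis mult_1)
  qed
  finally show ?thesis using size_pos_pos by (simp add: mult.commute mult_right_mono power2_eq_square)
qed

text \<open>Either both communities meet the complement of \<open>B\<close>, and then off \<open>B\<close> the labels
  agree with the communities up to a global sign, or one community lies inside \<open>B\<close>, which
  then has at least \<open>n/6\<close> nodes.\<close>
lemma min_hamming_le_three_card:
  assumes zt: "\<forall>i<n. zt i = 1 \<or> zt i = -1" and "finite B"
    and separated: "\<And>i j. i < n \<Longrightarrow> j < n \<Longrightarrow> i \<notin> B \<Longrightarrow> j \<notin> B \<Longrightarrow> z i \<noteq> z j \<Longrightarrow> zt i \<noteq> zt j"
  shows "real (min (hamming n zt z) (hamming n (\<lambda>i. - zt i) z)) \<le> 3 * real (card B)"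
proof (cases "comm_pos \<subseteq> B \<or> comm_neg \<subseteq> B")
  case True
  then have "size_pos \<le> real (card B) \<or> size_neg \<le> real (card B)"
    unfolding size_pos_def size_neg_def using card_mono[OF \<open>finite B\<close>] by auto
  then show ?thesis using size_pos_ge size_neg_ge min_hamming_le_half[OF labels zt] by linarith
next
  case False
  then obtain p m where p: "p < n" "p \<notin> B" "z p = 1" and m: "m < n" "m \<notin> B" "z m = -1"
    unfolding comm_pos_def comm_neg_def by blast
  have "zt i = zt j \<longleftrightarrow> z i = z j" if "i < n" "j < n" "i \<notin> B" "j \<notin> B" for i j
    using separated[OF that] separated[OF that(1) p(1) that(3) p(2)]
      separated[OF that(1) m(1) that(3) m(2)] separated[OF that(2) p(1) that(4) p(2)]
      separated[OF that(2) m(1) that(4) m(2)]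
      zt labels that p m by (smt (verit))
  then show ?thesis using min_hamming_le_card[OF labels zt _ \<open>finite B\<close>] by fastforce
qed

text \<open>Markov's inequality bounds the set \<open>B\<close> of nodes whose assigned center is at
  squared distance \<open>\<ge> D\<^sup>2/4\<close> from their block centroid; two nodes outside \<open>B\<close> in different
  communities cannot share a center, since the centroids are \<open>D\<close> apart.\<close>
lemma min_hamming_le_kmeans_dist:
  fixes u1 u2 :: "nat \<Rightarrow> real" and k :: "nat \<Rightarrow> nat" and X :: "nat \<Rightarrow> nat \<Rightarrow> real"
  defines "D2 \<equiv> (centroid_pos u1 - centroid_neg u1)\<^sup>2 + (centroid_pos u2 - centroid_neg u2)\<^sup>2"
  assumes k: "\<forall>i<n. k i < 2" and zt: "\<forall>i<n. zt i = (if k i = 0 then 1 else -1)"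
    and D2_pos: "0 < D2"
    and dist: "(\<Sum>i<n. (X (k i) 0 - block_mean u1 i)\<^sup>2 + (X (k i) 1 - block_mean u2 i)\<^sup>2) \<le> S"
  shows "real (min (hamming n zt z) (hamming n (\<lambda>i. - zt i) z)) \<le> 12 * S / D2"
proof -
  define e where "e i = (X (k i) 0 - block_mean u1 i)\<^sup>2 + (X (k i) 1 - block_mean u2 i)\<^sup>2" for i
  define B where "B = {i. i < n \<and> D2 / 4 \<le> e i}"
  have "finite B" unfolding B_def by simp
  have "real (card B) * (D2 / 4) = (\<Sum>i\<in>B. D2 / 4)" by simp
  also have "\<dots> \<le> (\<Sum>i\<in>B. e i)" by (rule sum_mono) (simp add: B_def)
  also have "\<dots> \<le> (\<Sum>i<n. e i)" by (rule sum_mono2) (auto simp: B_def e_def)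
  also have "\<dots> \<le> S" using dist unfolding e_def .
  finally have card_B: "real (card B) \<le> 4 * S / D2" using D2_pos by (simp add: field_simps)
  have "zt i \<noteq> zt j" if "i < n" "j < n" "i \<notin> B" "j \<notin> B" "z i \<noteq> z j" for i j
  proof
    assume "zt i = zt j"
    then have kk: "k i = k j" using zt k that(1,2) by (metis less_2_cases one_neq_neg_one)
    have "e i + e j = (centroid_pos u1 - X (k i) 0)\<^sup>2 + (centroid_pos u2 - X (k i) 1)\<^sup>2
        + ((centroid_neg u1 - X (k i) 0)\<^sup>2 + (centroid_neg u2 - X (k i) 1)\<^sup>2)"
    proof -
      have "z i = 1 \<and> z j \<noteq> 1 \<or> z i \<noteq> 1 \<and> z j = 1" using labels that(1,2,5) by (metis one_neq_neg_one)
      then show ?thesis unfolding e_def block_mean_def kk by (auto simp: power2_commute)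
    qed
    then have "D2 \<le> 2 * e i + 2 * e j"
      using power2_diff_le_twice[of "centroid_pos u1" "centroid_neg u1" "X (k i) 0"]
        power2_diff_le_twice[of "centroid_pos u2" "centroid_neg u2" "X (k i) 1"]
      unfolding D2_def by (simp add: power2_commute)
    then show False using that(3,4) unfolding B_def using that(1,2) by auto
  qed
  then have "real (min (hamming n zt z) (hamming n (\<lambda>i. - zt i) z)) \<le> 3 * real (card B)"
    using zt by (intro min_hamming_le_three_card \<open>finite B\<close>) auto
  then show ?thesis using card_B by simp
qed

text \<open>Comparison with the assignment by communities, whose k-means cost is the squared
  distance of \<open>u1, u2\<close> to their block means.\<close>
lemma kmeans_dist_block_mean_le:
  assumes k: "\<forall>i<n. k i < 2"
    and opt: "\<forall>k' X'. (\<forall>i<n. k' i < 2) \<longrightarrow>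
       kmeans_cost n u1 u2 k X \<le> (1 + \<epsilon>) * kmeans_cost n u1 u2 k' X'"
  shows "(\<Sum>i<n. (X (k i) 0 - block_mean u1 i)\<^sup>2 + (X (k i) 1 - block_mean u2 i)\<^sup>2)
    \<le> 2 * (2 + \<epsilon>) * (vinner n (block_residual u1) (block_residual u1) +
                       vinner n (block_residual u2) (block_residual u2))"
    (is "?dist \<le> 2 * (2 + \<epsilon>) * ?\<delta>")
proof -
  define kz where "kz i = (if z i = 1 then 0 else 1 :: nat)" for i
  define Xz where "Xz a b = (if a = 0 then (if b = 0 then centroid_pos u1 else centroid_pos u2)
    else (if b = 0 then centroid_neg u1 else centroid_neg u2))" for a b :: nat
  have "kmeans_cost n u1 u2 kz Xz = (\<Sum>i<n. (block_residual u1 i)\<^sup>2 + (block_residual u2 i)\<^sup>2)"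
    unfolding kmeans_cost_def
    by (intro sum.cong) (auto simp: kz_def Xz_def block_residual_def block_mean_def power2_commute)
  then have "kmeans_cost n u1 u2 kz Xz = ?\<delta>"
    by (simp add: vinner_def sum.distrib power2_eq_square)
  then have cost: "kmeans_cost n u1 u2 k X \<le> (1 + \<epsilon>) * ?\<delta>"
    using opt[rule_format, of kz Xz] by (simp add: kz_def)
  have "?dist \<le> (\<Sum>i<n. 2 * ((X (k i) 0 - u1 i)\<^sup>2 + (X (k i) 1 - u2 i)\<^sup>2)
      + 2 * ((u1 i - block_mean u1 i)\<^sup>2 + (u2 i - block_mean u2 i)\<^sup>2))"
    using power2_diff_le_twice by (intro sum_mono) (smt (verit) power2_commute)
  also have "\<dots> = 2 * kmeans_cost n u1 u2 k X + 2 * ?\<delta>"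
    unfolding kmeans_cost_def vinner_def block_residual_def
    by (simp add: sum.distrib sum_distrib_left power2_eq_square)
  finally show ?thesis using cost by (simp add: algebra_simps)
qed

lemma misclass_loss_le_small_perturbation:
  assumes "spectral_kmeans n T \<epsilon> zt" and \<epsilon>: "0 < \<epsilon>" and small: "\<eta> \<le> (s - d) * real n / 40"
  shows "misclass_loss n zt z \<le> 10000 * (2 + \<epsilon>) * (\<eta> / ((s - d) * real n))\<^sup>2"
proof -
  obtain u1 u2 k X l1 l2 where u: "vinner n u1 u1 = 1" "vinner n u2 u2 = 1" "vinner n u1 u2 = 0"
    and e1: "\<forall>i<n. mat_vec n T u1 i = l1 * u1 i" and e2: "\<forall>i<n. mat_vec n T u2 i = l2 * u2 i"
    and top: "\<forall>v \<mu>. (\<exists>i<n. v i \<noteq> 0) \<and> (\<forall>i<n. mat_vec n T v i = \<mu> * v i) \<and>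
               vinner n v u1 = 0 \<and> vinner n v u2 = 0 \<longrightarrow> \<bar>\<mu>\<bar> \<le> \<bar>l1\<bar> \<and> \<bar>\<mu>\<bar> \<le> \<bar>l2\<bar>"
    and k: "\<forall>i<n. k i < 2"
    and opt: "\<forall>k' X'. (\<forall>i<n. k' i < 2) \<longrightarrow>
      kmeans_cost n u1 u2 k X \<le> (1 + \<epsilon>) * kmeans_cost n u1 u2 k' X'"
    and zt: "\<forall>i<n. zt i = (if k i = 0 then 1 else -1)"
    using assms(1) unfolding spectral_kmeans_def top2_eigvecs_def by blast
  define \<theta> where "\<theta> = \<eta> / ((s - d) * real n)"
  have sdn: "0 < (s - d) * real n" using d_less_s n_pos by simp
  have \<theta>: "0 \<le> \<theta>" "\<theta> \<le> 1/40"
    unfolding \<theta>_def using perturbation_nonneg sdn small by (simp_all add: field_simps)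
  have "\<forall>v \<mu>. (\<exists>i<n. v i \<noteq> 0) \<and> (\<forall>i<n. mat_vec n T v i = \<mu> * v i) \<and>
      vinner n v u1 = 0 \<and> vinner n v u2 = 0 \<longrightarrow> \<bar>\<mu>\<bar> \<le> \<bar>l1\<bar>"
    "\<forall>v \<mu>. (\<exists>i<n. v i \<noteq> 0) \<and> (\<forall>i<n. mat_vec n T v i = \<mu> * v i) \<and>
      vinner n v u2 = 0 \<and> vinner n v u1 = 0 \<longrightarrow> \<bar>\<mu>\<bar> \<le> \<bar>l2\<bar>"
    using top by blast+
  moreover have "vinner n u2 u1 = 0" using u(3) by (simp add: vinner_commute)
  ultimately have "(s - d) * real n / 6 - \<eta> \<le> \<bar>l1\<bar>" "(s - d) * real n / 6 - \<eta> \<le> \<bar>l2\<bar>"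
    using abs_top_eigval_ge[OF u(1,3) e1 e2] abs_top_eigval_ge[OF u(2) _ e2 e1] by blast+
  then have "vnorm n (block_residual u1) \<le> 8 * \<theta>" "vnorm n (block_residual u2) \<le> 8 * \<theta>"
    unfolding \<theta>_def using small sdn
    by (intro vnorm_eigvec_residual_le[OF u(1) e1] vnorm_eigvec_residual_le[OF u(2) e2]; linarith)+
  note r = this
  have "(vnorm n (block_residual u1))\<^sup>2 \<le> (8 * \<theta>)\<^sup>2" "(vnorm n (block_residual u2))\<^sup>2 \<le> (8 * \<theta>)\<^sup>2"
    using r by (intro power_mono vnorm_nonneg; simp)+
  then have res: "vinner n (block_residual u1) (block_residual u1) +
      vinner n (block_residual u2) (block_residual u2) \<le> 128 * \<theta>\<^sup>2"
    by (simp add: power2_vnorm power_mult_distrib)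
  define D2 where "D2 = (centroid_pos u1 - centroid_neg u1)\<^sup>2 + (centroid_pos u2 - centroid_neg u2)\<^sup>2"
  have D2_nonneg: "0 \<le> D2" unfolding D2_def by simp
  have sep: "9/25 \<le> size_pos * D2"
    unfolding D2_def using r \<theta> by (intro centroid_separation u) linarith
  then have "D2 \<noteq> 0" by auto
  with D2_nonneg have D2_pos: "0 < D2" by simp
  have "size_pos * D2 \<le> real n * D2"
    using size_pos_plus_size_neg size_neg_pos D2_nonneg by (intro mult_right_mono) auto
  with sep have D2_n: "9/25 \<le> real n * D2" by linarith
  have "real (min (hamming n zt z) (hamming n (\<lambda>i. - zt i) z)) \<le> 12 * (2 * (2 + \<epsilon>) * (128 * \<theta>\<^sup>2)) / D2"
    unfolding D2_def
  proof (rule min_hamming_le_kmeans_dist[OF k zt])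
    show "(\<Sum>i<n. (X (k i) 0 - block_mean u1 i)\<^sup>2 + (X (k i) 1 - block_mean u2 i)\<^sup>2)
        \<le> 2 * (2 + \<epsilon>) * (128 * \<theta>\<^sup>2)"
    proof -
      have "2 * (2 + \<epsilon>) * (vinner n (block_residual u1) (block_residual u1) +
          vinner n (block_residual u2) (block_residual u2)) \<le> 2 * (2 + \<epsilon>) * (128 * \<theta>\<^sup>2)"
        using res \<epsilon> by (intro mult_left_mono) auto
      then show ?thesis using kmeans_dist_block_mean_le[OF k opt] by linarith
    qed
  qed (use D2_pos in \<open>simp add: D2_def\<close>)
  then have "misclass_loss n zt z \<le> 12 * (2 * (2 + \<epsilon>) * (128 * \<theta>\<^sup>2)) / D2 / real n"
    unfolding misclass_loss_def by (rule divide_right_mono) simp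
  also have "\<dots> = 12 * (2 * (2 + \<epsilon>) * (128 * \<theta>\<^sup>2)) / (real n * D2)"
    by (simp add: mult.commute)
  also have "\<dots> \<le> 12 * (2 * (2 + \<epsilon>) * (128 * \<theta>\<^sup>2)) / (9/25)"
    using D2_pos D2_n \<epsilon> by (intro divide_left_mono) auto
  also have "\<dots> = 25600/3 * ((2 + \<epsilon>) * \<theta>\<^sup>2)" by (simp add: field_simps)
  also have "\<dots> \<le> 10000 * ((2 + \<epsilon>) * \<theta>\<^sup>2)" using \<epsilon> by (intro mult_right_mono) auto
  finally show ?thesis unfolding \<theta>_def by (simp only: mult.assoc)
qed

theorem misclass_loss_le:
  assumes "spectral_kmeans n T \<epsilon> zt" and "0 < \<epsilon>"
  shows "misclass_loss n zt z \<le> 10000 * (2 + \<epsilon>) * (\<eta> / ((s - d) * real n))\<^sup>2"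
proof (cases "\<eta> \<le> (s - d) * real n / 40")
  case True
  then show ?thesis by (rule misclass_loss_le_small_perturbation[OF assms])
next
  case False
  then have "1/40 \<le> \<eta> / ((s - d) * real n)" using d_less_s n_pos by (simp add: field_simps)
  then have "10000 * 2 * (1/40)\<^sup>2 \<le> 10000 * (2 + \<epsilon>) * (\<eta> / ((s - d) * real n))\<^sup>2"
    using assms(2) by (intro mult_mono power_mono) auto
  moreover have "misclass_loss n zt z \<le> 1/2"
    using assms(1) labels unfolding spectral_kmeans_def
    by (intro misclass_loss_le_half) (auto split: if_splits)
  ultimately show ?thesis by (simp add: power2_eq_square)
qed

end

section \<open>The multilayer stochastic block model\<close>

lemma edge_pmf_expectation:
  assumes "0 \<le> \<rho>" "\<rho> \<le> 1" "0 \<le> p" "p \<le> 1" "0 \<le> q" "q \<le> 1"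
    and "zi = 1 \<or> zi = -1" "zj = 1 \<or> zj = -1"
  shows "measure_pmf.expectation (edge_pmf \<rho> p q zi zj) (\<lambda>e. if e then 1 else 0) =
    (if zi = zj then (1 - 2 * \<rho> * (1 - \<rho>)) * p + 2 * \<rho> * (1 - \<rho>) * q
     else 2 * \<rho> * (1 - \<rho>) * p + (1 - 2 * \<rho> * (1 - \<rho>)) * q)"
proof -
  define flip where "flip b = (if b then -1 else 1 :: int)" for b
  define edge where
    "edge ab = bernoulli_pmf (if zi * flip (fst ab) = zj * flip (snd ab) then p else q)" for ab
  have "edge_pmf \<rho> p q zi zj = bind_pmf (pair_pmf (bernoulli_pmf \<rho>) (bernoulli_pmf \<rho>)) edge"
    unfolding edge_pmf_def flip_pmf_def edge_def flip_def
    by (simp add: map_pair[symmetric] bind_map_pmf case_prod_beta)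
  then have "measure_pmf.expectation (edge_pmf \<rho> p q zi zj) (\<lambda>e. if e then 1 else 0) =
      (\<Sum>ab\<in>UNIV. pmf (pair_pmf (bernoulli_pmf \<rho>) (bernoulli_pmf \<rho>)) ab *
         (if zi * flip (fst ab) = zj * flip (snd ab) then p else q))"
    using assms(3-6) by (simp add: pmf_expectation_bind[where A = UNIV] edge_def)
  also have "\<dots> = (if zi = zj then (1 - 2 * \<rho> * (1 - \<rho>)) * p + 2 * \<rho> * (1 - \<rho>) * q
      else 2 * \<rho> * (1 - \<rho>) * p + (1 - 2 * \<rho> * (1 - \<rho>)) * q)"
    using assms(1,2,7,8) unfolding UNIV_Times_UNIV[symmetric] UNIV_bool
    by (auto simp: pmf_pair flip_def algebra_simps)
  finally show ?thesis .
qed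

lemma expected_Abar_eq_two_block:
  fixes L :: nat and \<omega> p q :: "nat \<Rightarrow> real" and \<rho> :: real
  defines "pb \<equiv> \<Sum>l<L. \<omega> l * p l" and "qb \<equiv> \<Sum>l<L. \<omega> l * q l" and "\<kappa> \<equiv> 2 * \<rho> * (1 - \<rho>)"
  assumes "0 \<le> \<rho>" "\<rho> \<le> 1" and pq: "\<forall>l<L. 0 \<le> q l \<and> q l \<le> 1 \<and> 0 \<le> p l \<and> p l \<le> 1"
    and "z i = 1 \<or> z i = -1" "z j = 1 \<or> z j = -1"
  shows "expected_Abar L \<omega> p q \<rho> z i j =
    two_block_mat z (pb - \<kappa> * (pb - qb)) (qb + \<kappa> * (pb - qb)) i j
      - (if i = j then pb - \<kappa> * (pb - qb) else 0)"
proof (cases "i = j")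
  case False
  have "expected_Abar L \<omega> p q \<rho> z i j =
      (\<Sum>l<L. \<omega> l * (if z i = z j then (1 - \<kappa>) * p l + \<kappa> * q l else \<kappa> * p l + (1 - \<kappa>) * q l))"
    unfolding expected_Abar_def \<kappa>_def using False pq assms(4-8)
    by (intro sum.cong refl) (simp add: edge_pmf_expectation)
  then show ?thesis using False
    by (simp add: two_block_mat_def pb_def qb_def sum_distrib_left sum.distrib sum_subtractf
        algebra_simps)
qed (simp add: expected_Abar_def two_block_mat_def)

lemma vnorm_perturbation_le_spec_norm:
  assumes "\<And>i j. i < n \<Longrightarrow> j < n \<Longrightarrow> E i j = P i j - (if i = j then c else 0)"
  shows "vnorm n (\<lambda>i. mat_vec n T x i - mat_vec n P x i)
    \<le> (spec_norm n (\<lambda>i j. T i j - E i j) + \<bar>c\<bar>) * vnorm n x"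
proof -
  have "mat_vec n P x i = mat_vec n E x i + c * x i" if "i < n" for i
  proof -
    have "mat_vec n P x i = (\<Sum>j<n. E i j * x j + (if i = j then c * x j else 0))"
      unfolding mat_vec_def
    proof (intro sum.cong refl)
      fix j assume "j \<in> {..<n}"
      then have "P i j = E i j + (if i = j then c else 0)" using assms[OF that, of j] by simp
      then show "P i j * x j = E i j * x j + (if i = j then c * x j else 0)"
        by (simp add: algebra_simps)
    qed
    then show ?thesis using that by (simp add: sum.distrib mat_vec_def)
  qed
  then have "vnorm n (\<lambda>i. mat_vec n T x i - mat_vec n P x i)
      = vnorm n (\<lambda>i. mat_vec n (\<lambda>i j. T i j - E i j) x i - c * x i)"
    by (intro vnorm_cong) (simp add: mat_vec_diff_mat)
  also have "\<dots> \<le> vnorm n (mat_vec n (\<lambda>i j. T i j - E i j) x) + \<bar>c\<bar> * vnorm n x"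
    using vnorm_diff_triangle[of n _ "\<lambda>i. c * x i"] by (simp only: vnorm_scale)
  also have "\<dots> \<le> (spec_norm n (\<lambda>i j. T i j - E i j) + \<bar>c\<bar>) * vnorm n x"
    using vnorm_mat_vec_le_spec_norm by (simp add: distrib_right)
  finally show ?thesis .
qed

lemma sym_mat_trim: "sym_mat n M \<Longrightarrow> sym_mat n (trim n L \<omega> p \<gamma> M)"
  unfolding sym_mat_def trim_def by auto

lemma sym_mat_Abar: "\<forall>l<L. adjacency n (A l) \<Longrightarrow> sym_mat n (Abar L \<omega> A)"
  unfolding sym_mat_def Abar_def adjacency_def by (auto intro!: sum.cong)

text \<open>With \<open>\<kappa> = 2\<rho>(1-\<rho>)\<close> and \<open>G = pb - qb\<close>, the left side exceeds \<open>\<kappa>\<close> by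
  \<open>(pb - \<kappa> G)/G \<ge> (1-2\<rho>)\<^sup>2\<close>, so the hypothesis forces \<open>\<beta> - 1/\<beta> \<le> 2c < 2\<close>.\<close>
lemma balance_le_3:
  fixes c \<rho> \<beta> pb qb :: real
  assumes "0 \<le> c" "c < 1" "0 \<le> \<rho>" "\<rho> < 1/2" "\<beta> \<ge> 1" "0 \<le> qb" "qb < pb"
    and cond: "\<beta> > 1 \<longrightarrow> pb / (pb - qb) \<le> c * (2 * (1 - 2*\<rho>)\<^sup>2 / (\<beta> - 1/\<beta>)) + 2 * (\<rho> - \<rho>\<^sup>2)"
  shows "\<beta> \<le> 3"
proof (rule ccontr)
  assume "\<not> \<beta> \<le> 3"
  then have \<beta>: "3 < \<beta>" by simp
  define K where "K = (1 - 2*\<rho>)\<^sup>2"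
  have K: "0 < K" unfolding K_def using assms(4) by simp
  have "1/\<beta> \<le> 1/3" using \<beta> by (simp add: field_simps)
  then have "8/3 \<le> \<beta> - 1/\<beta>" using \<beta> by linarith
  then have "c * (2 * K / (\<beta> - 1/\<beta>)) \<le> 1 * (2 * K / (8/3))"
    using assms(1,2) K by (intro mult_mono divide_left_mono) auto
  then have "c * (2 * K / (\<beta> - 1/\<beta>)) \<le> 3 * K / 4" by simp
  moreover have "K \<le> pb / (pb - qb) - 2 * (\<rho> - \<rho>\<^sup>2)"
  proof -
    have "pb / (pb - qb) - 2 * (\<rho> - \<rho>\<^sup>2) = K + (qb + 2 * \<rho> * (1 - \<rho>) * (pb - qb)) / (pb - qb)"
      unfolding K_def using assms(7) by (simp add: field_simps power2_eq_square)
    moreover have "0 \<le> (qb + 2 * \<rho> * (1 - \<rho>) * (pb - qb)) / (pb - qb)"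
      using assms(3,4,6,7) by (intro divide_nonneg_pos add_nonneg_nonneg mult_nonneg_nonneg) auto
    ultimately show ?thesis by linarith
  qed
  moreover have "pb / (pb - qb) \<le> c * (2 * K / (\<beta> - 1/\<beta>)) + 2 * (\<rho> - \<rho>\<^sup>2)"
    using cond \<beta> unfolding K_def by simp
  ultimately have "K \<le> 3 * K / 4" by linarith
  then show False using K by simp
qed

lemma sbm_perturbed_two_block:
  fixes n L :: nat and \<rho> \<gamma> :: real and \<omega> p q :: "nat \<Rightarrow> real" and z :: "nat \<Rightarrow> int"
    and A :: "nat \<Rightarrow> nat \<Rightarrow> nat \<Rightarrow> real"
  defines "pb \<equiv> \<Sum>l<L. \<omega> l * p l" and "qb \<equiv> \<Sum>l<L. \<omega> l * q l"
    and "\<kappa> \<equiv> 2 * \<rho> * (1 - \<rho>)" and "T \<equiv> trim n L \<omega> p \<gamma> (Abar L \<omega> A)"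
  assumes "L \<ge> 1" "0 \<le> \<rho>" "\<rho> < 1/2" "0 < n"
    and pq: "\<forall>l<L. \<omega> l > 0 \<and> 0 < q l \<and> q l < p l \<and> p l < 1"
    and labels: "\<forall>i<n. z i = 1 \<or> z i = -1"
    and balanced: "real n \<le> 6 * real (card {i. i < n \<and> z i = 1})"
      "real n \<le> 6 * real (card {i. i < n \<and> z i = -1})"
    and adj: "\<forall>l<L. adjacency n (A l)"
  shows "perturbed_two_block n T z (pb - \<kappa> * (pb - qb)) (qb + \<kappa> * (pb - qb))
    (spec_norm n (\<lambda>i j. T i j - expected_Abar L \<omega> p q \<rho> z i j) + (pb - \<kappa> * (pb - qb)))"
proof -
  define s where "s = pb - \<kappa> * (pb - qb)"
  define d where "d = qb + \<kappa> * (pb - qb)"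
  define E where "E = expected_Abar L \<omega> p q \<rho> z"
  have "{..<L} \<noteq> {}" using \<open>L \<ge> 1\<close> by (simp add: lessThan_empty_iff)
  then have qb: "0 < qb" and G: "0 < pb - qb"
    using pq unfolding qb_def pb_def by (auto simp: sum_subtractf[symmetric] intro!: sum_pos)
  have "s - d = (1 - 2*\<rho>)\<^sup>2 * (pb - qb)"
    unfolding s_def d_def \<kappa>_def by (simp add: power2_eq_square algebra_simps)
  moreover have "0 < (1 - 2*\<rho>)\<^sup>2 * (pb - qb)" using G \<open>\<rho> < 1/2\<close> by simp
  moreover have "0 \<le> \<kappa>" unfolding \<kappa>_def using \<open>0 \<le> \<rho>\<close> \<open>\<rho> < 1/2\<close> by simp
  ultimately have d: "0 \<le> d" "d < s" using qb G unfolding d_def by auto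
  have "E i j = two_block_mat z s d i j - (if i = j then s else 0)" if "i < n" "j < n" for i j
    unfolding E_def s_def d_def \<kappa>_def pb_def qb_def using pq \<open>0 \<le> \<rho>\<close> \<open>\<rho> < 1/2\<close> labels that
    by (intro expected_Abar_eq_two_block) auto
  then have "vnorm n (\<lambda>i. mat_vec n T x i - mat_vec n (two_block_mat z s d) x i)
      \<le> (spec_norm n (\<lambda>i j. T i j - E i j) + s) * vnorm n x" for x
    using vnorm_perturbation_le_spec_norm[of n E "two_block_mat z s d" s T x] d by simp
  then show ?thesis
    using sym_mat_trim sym_mat_Abar adj labels balanced \<open>0 < n\<close> d
    unfolding T_def E_def s_def[symmetric] d_def[symmetric] by unfold_locales auto
qed

lemma alg1_misclass_loss_le:
  fixes n L :: nat and \<rho> \<beta> c \<gamma> \<epsilon> :: real and \<omega> p q :: "nat \<Rightarrow> real" and z zt :: "nat \<Rightarrow> int"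
    and A :: "nat \<Rightarrow> nat \<Rightarrow> nat \<Rightarrow> real"
  defines "pb \<equiv> \<Sum>l<L. \<omega> l * p l" and "qb \<equiv> \<Sum>l<L. \<omega> l * q l"
  assumes "0 \<le> c" "c < 1" "L \<ge> 1" "0 \<le> \<rho>" "\<rho> < 1/2" "\<beta> \<ge> 1"
    and pq: "\<forall>l<L. \<omega> l > 0 \<and> 0 < q l \<and> q l < p l \<and> p l < 1"
    and cond: "\<beta> > 1 \<longrightarrow> pb / (pb - qb) \<le> c * (2 * (1 - 2*\<rho>)\<^sup>2 / (\<beta> - 1/\<beta>)) + 2 * (\<rho> - \<rho>\<^sup>2)"
    and labels: "\<forall>i<n. z i = 1 \<or> z i = -1"
    and card_pos: "real n / (2*\<beta>) \<le> real (card {i. i < n \<and> z i = 1})"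
    and card_neg: "real n / (2*\<beta>) \<le> real (card {i. i < n \<and> z i = -1})"
    and adj: "\<forall>l<L. adjacency n (A l)"
    and "\<epsilon> > 0" and alg: "alg1_output n L A \<omega> p \<gamma> \<epsilon> zt"
  shows "misclass_loss n zt z \<le>
       10000 * ((2 + \<epsilon>) / (real n ^ 2 * (1 - 2*\<rho>) ^ 4)) *
       ((spec_norm n (\<lambda>i j. trim n L \<omega> p \<gamma> (Abar L \<omega> A) i j - expected_Abar L \<omega> p q \<rho> z i j)
          + (pb - 2 * \<rho> * (1 - \<rho>) * (pb - qb)))\<^sup>2 / (pb - qb)\<^sup>2)"
proof (cases "n = 0")
  case True
  then show ?thesis by (simp add: misclass_loss_def)
next
  case False
  define \<kappa> where "\<kappa> = 2 * \<rho> * (1 - \<rho>)"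
  define \<eta> where "\<eta> = spec_norm n (\<lambda>i j. trim n L \<omega> p \<gamma> (Abar L \<omega> A) i j
    - expected_Abar L \<omega> p q \<rho> z i j) + (pb - \<kappa> * (pb - qb))"
  have "0 < qb" "qb < pb"
    using sum_pos[of "{..<L}" "\<lambda>l. \<omega> l * q l"] sum_strict_mono[of "{..<L}" "\<lambda>l. \<omega> l * q l"]
      pq \<open>L \<ge> 1\<close> unfolding pb_def qb_def by (auto simp: lessThan_empty_iff)
  then have "\<beta> \<le> 3"
    using balance_le_3[OF \<open>0 \<le> c\<close> \<open>c < 1\<close> \<open>0 \<le> \<rho>\<close> \<open>\<rho> < 1/2\<close> \<open>\<beta> \<ge> 1\<close> _ _ cond] by simp
  then have "real n / 6 \<le> real n / (2*\<beta>)" using \<open>\<beta> \<ge> 1\<close> by (intro divide_left_mono) auto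
  then interpret perturbed_two_block n "trim n L \<omega> p \<gamma> (Abar L \<omega> A)" z "pb - \<kappa> * (pb - qb)"
      "qb + \<kappa> * (pb - qb)" \<eta>
    unfolding pb_def qb_def \<kappa>_def \<eta>_def
    using card_pos card_neg False \<open>L \<ge> 1\<close> \<open>0 \<le> \<rho>\<close> \<open>\<rho> < 1/2\<close> pq labels adj
    by (intro sbm_perturbed_two_block) auto
  have "misclass_loss n zt z \<le>
      10000 * (2 + \<epsilon>) * (\<eta> / ((pb - \<kappa> * (pb - qb) - (qb + \<kappa> * (pb - qb))) * real n))\<^sup>2"
    using alg \<open>\<epsilon> > 0\<close> unfolding alg1_output_iff_spectral_kmeans by (rule misclass_loss_le)
  also have "pb - \<kappa> * (pb - qb) - (qb + \<kappa> * (pb - qb)) = (1 - 2*\<rho>)\<^sup>2 * (pb - qb)"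
    unfolding \<kappa>_def by (simp add: power2_eq_square algebra_simps)
  also have "10000 * (2 + \<epsilon>) * (\<eta> / ((1 - 2*\<rho>)\<^sup>2 * (pb - qb) * real n))\<^sup>2
      = 10000 * ((2 + \<epsilon>) / (real n ^ 2 * (1 - 2*\<rho>) ^ 4)) * (\<eta>\<^sup>2 / (pb - qb)\<^sup>2)"
    by (simp add: power_divide power_mult_distrib flip: power_mult)
  finally show ?thesis unfolding \<eta>_def \<kappa>_def by simp
qed

theorem mainTheorem8:
  fixes c :: real
  assumes "0 \<le> c" and "c < 1"
  shows "\<exists>C::real. \<forall>(n::nat) (L::nat) (\<rho>::real) (\<beta>::real) (\<omega>::nat \<Rightarrow> real)
      (p::nat \<Rightarrow> real) (q::nat \<Rightarrow> real) (z::nat \<Rightarrow> int) (A::nat \<Rightarrow> nat \<Rightarrow> nat \<Rightarrow> real)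
      (\<gamma>::real) (\<epsilon>::real) (zt::nat \<Rightarrow> int).
    (let pb = (\<Sum>l<L. \<omega> l * p l); qb = (\<Sum>l<L. \<omega> l * q l) in
     L \<ge> 1 \<and> 0 \<le> \<rho> \<and> \<rho> < 1/2 \<and> \<beta> \<ge> 1 \<and>
     (\<forall>l<L. \<omega> l > 0 \<and> 0 < q l \<and> q l < p l \<and> p l < 1) \<and>
     (\<beta> > 1 \<longrightarrow> pb / (pb - qb) \<le> c * (2 * (1 - 2*\<rho>)\<^sup>2 / (\<beta> - 1/\<beta>)) + 2 * (\<rho> - \<rho>\<^sup>2)) \<and>
     (\<forall>i<n. z i = 1 \<or> z i = -1) \<and>
     real n / (2*\<beta>) \<le> real (card {i. i < n \<and> z i = 1}) \<and>
     real (card {i. i < n \<and> z i = 1}) \<le> real n * \<beta> / 2 \<and>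
     real n / (2*\<beta>) \<le> real (card {i. i < n \<and> z i = -1}) \<and>
     real (card {i. i < n \<and> z i = -1}) \<le> real n * \<beta> / 2 \<and>
     (\<forall>l<L. adjacency n (A l)) \<and>
     \<gamma> > 1 \<and> \<epsilon> > 0 \<and>
     alg1_output n L A \<omega> p \<gamma> \<epsilon> zt
     \<longrightarrow>
     misclass_loss n zt z \<le>
       C * ((2 + \<epsilon>) / (real n ^ 2 * (1 - 2*\<rho>) ^ 4)) *
       ((spec_norm n (\<lambda>i j. trim n L \<omega> p \<gamma> (Abar L \<omega> A) i j - expected_Abar L \<omega> p q \<rho> z i j)
          + (pb - 2 * \<rho> * (1 - \<rho>) * (pb - qb)))\<^sup>2 / (pb - qb)\<^sup>2))"
  unfolding Let_def
  by (intro exI[of _ 10000] allI impI, elim conjE) (rule alg1_misclass_loss_le[OF assms])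

end
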